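(* Let $\mathcal{R}$ be any list over $[K]$ and define its attraction gap $$\Delta(\mathcal{R})=\sum_{k=1}^{K-1}\mathbb{1}\{\alpha(\mathcal{R}(k+1))-\alpha(\mathcal{R}(k))>0\}\,(\alpha(\mathcal{R}(k+1))-\alpha(\mathcal{R}(k))).$$ Then $$\sum_{k=1}^K\big(\chi(\mathcal{R}^*,k)\alpha(k)-\chi(\mathcal{R},k)\alpha(\mathcal{R}(k))\big)\le K\chi_{\max}\Delta(\mathcal{R}).$$
   Context: Items are $[K]$; a list $\mathcal{R}$ is an ordering of all $K$ items, $\mathcal{R}(k)$ being the item at position $k$. $\alpha\in[0,1]^K$ are attraction probabilities with $\alpha(1)>\dots>\alpha(K)>0$, and $\chi(\mathcal{R},k)\in[0,1]$ is the examination probability of position $k$ in list $\mathcal{R}$. $\mathcal{R}^*=(1,\dots,K)$ and $\chi_{\max}=\chi(\mathcal{R}^*,1)$. Assumed (among the paper's standing assumptions A1–A5): (A3) $\chi(\mathcal{R},k)\ge\chi(\mathcal{R},\ell)$ for $k<\ell$; (A5) $\chi(\mathcal{R},k)\ge\chi(\mathcal{R}^*,k)$ for all lists $\mathcal{R}$ and positions $k$; and also (A1) $\sum_k\chi(\mathcal{R},k)\alpha(\mathcal{R}(k))\le\sum_k\chi(\mathcal{R}^*,k)\alpha(k)$ for all $\mathcal{R}$, (A2) $\chi(\mathcal{R},k)$ depends only on the set $\{\mathcal{R}(1),\dots,\mathcal{R}(k-1)\}$, (A4) if $\mathcal{R},\mathcal{R}'$ differ only by exchanging the items at positions $k<\ell$,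 then $\alpha(\mathcal{R}(k))\le\alpha(\mathcal{R}(\ell))\iff\chi(\mathcal{R},\ell)\ge\chi(\mathcal{R}',\ell)$. *)

theory Defs
  imports Complex_Main "HOL-Combinatorics.Permutations"
begin

(* Items are {1..K}; positions are {1..K}.  A list R is a permutation of {1..K}
   (R permutes {1..K}); R k is the item at position k.  The optimal list R* is id. *)

definition attraction_gap :: "nat \<Rightarrow> (nat \<Rightarrow> real) \<Rightarrow> (nat \<Rightarrow> nat) \<Rightarrow> real" where
  "attraction_gap K \<alpha> R =
     (\<Sum>k = 1..K - 1. (if \<alpha> (R (k + 1)) - \<alpha> (R k) > 0 then 1 else 0)
                       * (\<alpha> (R (k + 1)) - \<alpha> (R k)))"

end

theory Submission
  imports Defs
begin

(* Since A5 gives chi(R,k) >= chi(R*,k), the k-th summand is at most chi(R*,k) (alpha(k) - alpha(R(k))),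
   and chi(R*,k) <= chi_max by A3.  It remains to bound the attraction drop alpha(k) - alpha(R(k)) by
   Delta(R).  If R(k) <= k the drop is not positive.  Otherwise, by pigeonhole, some later position
   p > k holds an item R(p) <= k, so alpha(R(p)) >= alpha(k), and the rise of alpha o R from position k
   to position p is covered by the positive increments of alpha o R between k and p, which are part
   of Delta(R). *)

lemma diff_le_sum_positive_increments:
  fixes f :: "nat \<Rightarrow> 'a::linordered_ab_group_add"
  assumes "i \<le> p"
  shows "f p - f i \<le> (\<Sum>k = i..<p. max 0 (f (Suc k) - f k))"
  using assms
proof (induction p rule: dec_induct)
  case base
  then show ?case by simp
next
  case (step p)
  have "f (Suc p) - f i = (f p - f i) + (f (Suc p) - f p)"
    by (simp add: algebra_simps)
  also have "\<dots> \<le> (\<Sum>k = i..<p. max 0 (f (Suc k) - f k)) + max 0 (f (Suc p) - f p)"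
    using step.IH by (intro add_mono) auto
  also have "\<dots> = (\<Sum>k = i..<Suc p. max 0 (f (Suc k) - f k))"
    using step.hyps by simp
  finally show ?case .
qed

lemma attraction_gap_eq_sum_max:
  "attraction_gap K \<alpha> R = (\<Sum>k = 1..K - 1. max 0 (\<alpha> (R (Suc k)) - \<alpha> (R k)))"
  unfolding attraction_gap_def by (intro sum.cong) auto

lemma attraction_gap_nonneg: "0 \<le> attraction_gap K \<alpha> R"
  unfolding attraction_gap_eq_sum_max by (intro sum_nonneg) auto

lemma permutes_interval_exists_later_le:
  fixes R :: "nat \<Rightarrow> nat"
  assumes R_perm: "R permutes {m..n}" and moved: "i < R i"
  shows "\<exists>p. i < p \<and> p \<le> n \<and> R p \<le> i"
proof (rule ccontr)
  assume no_later: "\<not> ?thesis"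
  have later_gt: "i < R p" if "i \<le> p" "p \<le> n" for p
  proof (cases "p = i")
    case False
    with that have "i < p" by simp
    with no_later \<open>p \<le> n\<close> show ?thesis by (auto simp: not_le)
  qed (use moved in simp)
  have "i \<in> {m..n}"
    using moved permutes_not_in[OF R_perm] by fastforce
  then have "R ` {i..n} \<subseteq> {i<..n}"
    using later_gt permutes_in_image[OF R_perm] by fastforce
  moreover have "inj_on R {i..n}"
    using permutes_inj[OF R_perm] by (rule inj_on_subset) simp
  ultimately have "card {i..n} \<le> card {i<..n}"
    by (meson card_inj_on_le finite_greaterThanAtMost)
  with \<open>i \<in> {m..n}\<close> show False by (simp add: Suc_diff_le)
qed

lemma attraction_drop_le_attraction_gap:
  fixes \<alpha> :: "nat \<Rightarrow> real"
  assumes R_perm: "R permutes {1..K}"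
    and alpha_antitone: "\<And>i j. 1 \<le> i \<Longrightarrow> i \<le> j \<Longrightarrow> j \<le> K \<Longrightarrow> \<alpha> j \<le> \<alpha> i"
    and i: "i \<in> {1..K}"
  shows "\<alpha> i - \<alpha> (R i) \<le> attraction_gap K \<alpha> R"
proof (cases "R i \<le> i")
  case True
  have "R i \<in> {1..K}"
    using i permutes_in_image[OF R_perm] by blast
  with True i have "\<alpha> i \<le> \<alpha> (R i)"
    using alpha_antitone[of "R i" i] by simp
  then show ?thesis
    using attraction_gap_nonneg[of K \<alpha> R] by linarith
next
  case False
  then obtain p where p: "i < p" "p \<le> K" "R p \<le> i"
    using permutes_interval_exists_later_le[OF R_perm] by (meson not_le)
  have "p \<in> {1..K}"
    using p i by simp
  then have "R p \<in> {1..K}"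
    using permutes_in_image[OF R_perm] by blast
  with p i have "\<alpha> i \<le> \<alpha> (R p)"
    using alpha_antitone[of "R p" i] by simp
  moreover have "\<alpha> (R p) - \<alpha> (R i) \<le> (\<Sum>k = i..<p. max 0 (\<alpha> (R (Suc k)) - \<alpha> (R k)))"
    using diff_le_sum_positive_increments[of i p "\<lambda>k. \<alpha> (R k)"] p by simp
  moreover have "(\<Sum>k = i..<p. max 0 (\<alpha> (R (Suc k)) - \<alpha> (R k))) \<le> attraction_gap K \<alpha> R"
    unfolding attraction_gap_eq_sum_max using i p by (intro sum_mono2) auto
  ultimately show ?thesis by linarith
qed

theorem lemma2:
  fixes K :: nat
    and \<alpha> :: "nat \<Rightarrow> real"
    and \<chi> :: "(nat \<Rightarrow> nat) \<Rightarrow> nat \<Rightarrow> real"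
    and R :: "nat \<Rightarrow> nat"
  assumes alpha_range: "\<And>i. i \<in> {1..K} \<Longrightarrow> 0 \<le> \<alpha> i \<and> \<alpha> i \<le> 1"
    and alpha_decr: "\<And>i j. 1 \<le> i \<Longrightarrow> i < j \<Longrightarrow> j \<le> K \<Longrightarrow> \<alpha> j < \<alpha> i"
    and alpha_pos: "\<And>i. i \<in> {1..K} \<Longrightarrow> 0 < \<alpha> i"
    and chi_range: "\<And>L k. L permutes {1..K} \<Longrightarrow> k \<in> {1..K} \<Longrightarrow> 0 \<le> \<chi> L k \<and> \<chi> L k \<le> 1"
    and A1: "\<And>L. L permutes {1..K} \<Longrightarrow>
              (\<Sum>k = 1..K. \<chi> L k * \<alpha> (L k)) \<le> (\<Sum>k = 1..K. \<chi> id k * \<alpha> k)"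
    and A2: "\<And>L L' k. L permutes {1..K} \<Longrightarrow> L' permutes {1..K} \<Longrightarrow> k \<in> {1..K} \<Longrightarrow>
              L ` {1..<k} = L' ` {1..<k} \<Longrightarrow> \<chi> L k = \<chi> L' k"
    and A3: "\<And>L k l. L permutes {1..K} \<Longrightarrow> 1 \<le> k \<Longrightarrow> k < l \<Longrightarrow> l \<le> K \<Longrightarrow>
              \<chi> L l \<le> \<chi> L k"
    and A4: "\<And>L k l. L permutes {1..K} \<Longrightarrow> 1 \<le> k \<Longrightarrow> k < l \<Longrightarrow> l \<le> K \<Longrightarrow>
              (\<alpha> (L k) \<le> \<alpha> (L l) \<longleftrightarrow> \<chi> (L(k := L l, l := L k)) l \<le> \<chi> L l)"
    and A5: "\<And>L k. L permutes {1..K} \<Longrightarrow> k \<in> {1..K} \<Longrightarrow> \<chi> id k \<le> \<chi> L k"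
    and R_perm: "R permutes {1..K}"
  shows "(\<Sum>k = 1..K. \<chi> id k * \<alpha> k - \<chi> R k * \<alpha> (R k))
           \<le> real K * \<chi> id 1 * attraction_gap K \<alpha> R"
proof -
  let ?\<Delta> = "attraction_gap K \<alpha> R"
  have alpha_antitone: "\<alpha> j \<le> \<alpha> i" if "1 \<le> i" "i \<le> j" "j \<le> K" for i j
    using alpha_decr[of i j] that by (cases "i = j") auto
  have "\<chi> id k * \<alpha> k - \<chi> R k * \<alpha> (R k) \<le> \<chi> id 1 * ?\<Delta>" if k: "k \<in> {1..K}" for k
  proof -
    have "0 \<le> \<alpha> (R k)"
      using alpha_range k permutes_in_image[OF R_perm] by blast
    then have "\<chi> id k * \<alpha> k - \<chi> R k * \<alpha> (R k) \<le> \<chi> id k * (\<alpha> k - \<alpha> (R k))"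
      using mult_right_mono[OF A5[OF R_perm k]] by (simp add: algebra_simps)
    also have "\<dots> \<le> \<chi> id k * ?\<Delta>"
      using attraction_drop_le_attraction_gap[OF R_perm, of \<alpha> k] alpha_antitone k
        chi_range[OF permutes_id k]
      by (simp add: mult_left_mono)
    also have "\<dots> \<le> \<chi> id 1 * ?\<Delta>"
      using A3[OF permutes_id, of 1 k] k attraction_gap_nonneg[of K \<alpha> R]
      by (cases "k = 1") (auto intro: mult_right_mono)
    finally show ?thesis .
  qed
  then have "(\<Sum>k = 1..K. \<chi> id k * \<alpha> k - \<chi> R k * \<alpha> (R k)) \<le> (\<Sum>k = 1..K. \<chi> id 1 * ?\<Delta>)"
    by (rule sum_mono)
  then show ?thesis by simp
qed

end
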